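(* Let $A\in\mathbb{R}^{n\times n}$ be Metzler and let $E\in\mathbb{R}^{n\times q}$, $C\in\mathbb{R}^{q\times n}$, $F\in\mathbb{R}^{q\times q}$ be entrywise nonnegative. Let $q=q_1+\dots+q_N$ and $$\boldsymbol{\Delta}^{\infty}:=\{\Delta=\mathrm{diag}(\Delta_1,\ldots,\Delta_N):\ \Delta_i\in\mathbb{C}^{q_i\times q_i},\ \|\Delta_i\|_\infty\le 1\},\qquad \mathcal{D}_\Delta:=\{\mathrm{diag}(d_1I_{q_1},\ldots,d_NI_{q_N}):\ d_i>0\}.$$ Consider the uncertain system $\dot x=Ax+Ew$, $z=Cx+Fw$, $w=\Delta z$. The following statements are equivalent: (i) The uncertain system is asymptotically stable for all $\Delta\in\boldsymbol{\Delta}^{\infty}$. (ii) There exist a vector $\lambda\in\mathbb{R}^n_{>0}$ and a matrix $D\in\mathcal{D}_\Delta$ such that $$\begin{bmatrix}A & E\\ C & F-I_q\end{bmatrix}\begin{bmatrix}\lambda\\ D\mathbf{1}_q\end{bmatrix}<0 .$$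
   Context: A real matrix is Metzler if all its off-diagonal entries are nonnegative. $\|\cdot\|_\infty$ is the matrix norm induced by the vector $\infty$-norm. $\mathbf{1}_q$ is the vector of ones. Vector inequalities are componentwise. The uncertain system is asymptotically stable for a given $\Delta$ if $I-F\Delta$ is invertible and $A+E\Delta(I-F\Delta)^{-1}C$ is Hurwitz stable. *)

theory Defs
  imports "HOL-Analysis.Analysis"
begin

text \<open>Matrices are HOL-Analysis matrices: M :: 'a^'cols^'rows, entry M$i$j.\<close>

definition metzler :: "real^'n^'n \<Rightarrow> bool" where
  "metzler A \<longleftrightarrow> (\<forall>i j. i \<noteq> j \<longrightarrow> 0 \<le> A$i$j)"

definition nonneg_mat :: "real^'c^'r \<Rightarrow> bool" where
  "nonneg_mat M \<longleftrightarrow> (\<forall>i j. 0 \<le> M$i$j)"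

definition cmat :: "real^'c^'r \<Rightarrow> complex^'c^'r" where
  "cmat M = (\<chi> i j. complex_of_real (M$i$j))"

definition hurwitz :: "complex^'n^'n \<Rightarrow> bool" where
  "hurwitz M \<longleftrightarrow> (\<forall>s v. v \<noteq> 0 \<and> M *v v = s *s v \<longrightarrow> Re s < 0)"

text \<open>The block structure q = q_1 + ... + q_N is given by a labelling blk of the
  index set 'q by block labels 'b. The uncertainty set: block-diagonal complex matrices
  whose diagonal blocks Delta_k have induced infinity-norm (max row sum of moduli) at most 1.\<close>
definition unc_set :: "('q::finite \<Rightarrow> 'b) \<Rightarrow> (complex^'q^'q) set" where
  "unc_set blk = {\<Delta>. (\<forall>i j. blk i \<noteq> blk j \<longrightarrow> \<Delta>$i$j = 0) \<and>
     (\<forall>k. \<forall>i. blk i = k \<longrightarrow> (\<Sum>j\<in>{j. blk j = k}. cmod (\<Delta>$i$j)) \<le> 1)}"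

definition asym_stable ::
  "real^'n^'n \<Rightarrow> real^'q^'n \<Rightarrow> real^'n^'q \<Rightarrow> real^'q^'q \<Rightarrow> complex^'q^'q \<Rightarrow> bool" where
  "asym_stable A E C F \<Delta> \<longleftrightarrow>
     invertible (mat 1 - cmat F ** \<Delta>) \<and>
     hurwitz (cmat A + cmat E ** \<Delta> ** matrix_inv (mat 1 - cmat F ** \<Delta>) ** cmat C)"

end

theory Submission
  imports Defs
begin

text \<open>Sufficiency: no admissible \<open>\<Delta>\<close> increases the maximum norm weighted by \<open>D\<one>\<close>, and
  \<open>F D\<one> < D\<one>\<close>, so the loop equation \<open>z = C v + F \<Delta> z\<close> bounds \<open>z\<close> by the same weights
  as the state \<open>v\<close>. At an index where \<open>|v\<^sub>i| / \<lambda>\<^sub>i\<close> is maximal, the eigenvalue equation then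
  gives the Gershgorin-type estimate \<open>|s - a\<^sub>i\<^sub>i| < -a\<^sub>i\<^sub>i\<close>, whence \<open>Re s < 0\<close>.

  Necessity: if the linear inequalities are infeasible, Gordan's alternative yields a nonnegative
  dual vector \<open>(p, r)\<close>. From it one builds a nonnegative, blockwise row-stochastic \<open>\<Delta>\<close> and a
  Metzler matrix \<open>N\<close> with \<open>N (p, r) \<ge> 0\<close>; a Brouwer fixed point argument gives a nonnegative
  eigenvector of \<open>N\<close> with eigenvalue \<open>\<sigma> \<ge> 0\<close>. Read back, it is a left eigenvector of the closed
  loop for the admissible uncertainty \<open>\<Delta> / (1 + \<sigma>)\<close> with eigenvalue \<open>\<sigma>\<close>, contradicting stability.\<close>

section \<open>Sufficiency: weighted maximum-norm estimates\<close>

lemma weighted_max_attained: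
  fixes z :: "'a::real_normed_vector^'n::finite" and w :: "real^'n"
  assumes w: "\<forall>j. 0 < w$j"
  obtains t j0 where "0 \<le> t" "\<forall>j. norm (z$j) \<le> t * w$j" "norm (z$j0) = t * w$j0"
proof -
  let ?f = "\<lambda>j. norm (z$j) / w$j"
  have "Max (range ?f) \<in> range ?f"
    by (rule Max_in) auto
  then obtain j0 where j0: "Max (range ?f) = ?f j0"
    by blast
  have "?f j \<le> ?f j0" for j
    unfolding j0[symmetric] by (rule Max_ge) auto
  then have bound: "norm (z$j) \<le> ?f j0 * w$j" for j
    using w by (simp add: divide_le_eq)
  have attained: "norm (z$j0) = ?f j0 * w$j0"
    using w[rule_format, of j0] by simp
  have "0 \<le> ?f j0"
    using w[rule_format, of j0] by simp
  then show ?thesis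
    using that bound attained by blast
qed

lemma norm_cmat_mult_le:
  assumes "nonneg_mat M" "\<forall>j. cmod (z$j) \<le> y$j"
  shows "cmod ((cmat M *v z)$i) \<le> (M *v y)$i"
proof -
  have "cmod ((cmat M *v z)$i) \<le> (\<Sum>j\<in>UNIV. cmod (complex_of_real (M$i$j) * z$j))"
    unfolding matrix_vector_mult_def cmat_def by (simp add: norm_sum)
  also have "\<dots> \<le> (\<Sum>j\<in>UNIV. M$i$j * y$j)"
    using assms by (intro sum_mono) (simp add: nonneg_mat_def norm_mult mult_left_mono)
  finally show ?thesis by (simp add: matrix_vector_mult_def)
qed

lemma norm_unc_mult_le:
  assumes D: "\<Delta> \<in> unc_set blk" and z: "\<forall>j. cmod (z$j) \<le> g (blk j)"
  shows "cmod ((\<Delta> *v z)$i) \<le> g (blk i)"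
proof -
  let ?B = "{j. blk j = blk i}"
  have "(\<Delta> *v z)$i = (\<Sum>j\<in>?B. \<Delta>$i$j * z$j)"
    unfolding matrix_vector_mult_def
    by (simp, rule sum.mono_neutral_right) (use D in \<open>auto simp: unc_set_def\<close>)
  moreover have "\<forall>j\<in>?B. cmod (z$j) \<le> g (blk i)"
    using z by (metis mem_Collect_eq)
  ultimately have "cmod ((\<Delta> *v z)$i) \<le> (\<Sum>j\<in>?B. cmod (\<Delta>$i$j) * g (blk i))"
    by (auto simp: norm_mult intro!: order_trans[OF norm_sum] sum_mono mult_left_mono)
  also have "\<dots> = (\<Sum>j\<in>?B. cmod (\<Delta>$i$j)) * g (blk i)"
    by (simp add: sum_distrib_right)
  also have "\<dots> \<le> g (blk i)"
    using D order_trans[OF norm_ge_zero z[rule_format, of i]]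
    by (intro mult_left_le_one_le) (auto simp: unc_set_def sum_nonneg)
  finally show ?thesis .
qed

lemma nonneg_mat_mult_nonneg:
  "nonneg_mat M \<Longrightarrow> \<forall>j. 0 \<le> y$j \<Longrightarrow> 0 \<le> (M *v y)$i"
  by (auto simp: matrix_vector_mult_def nonneg_mat_def intro!: sum_nonneg)

lemma matrix_vector_mult_scaleR_nth:
  fixes M :: "real^'a::finite^'b"
  shows "(M *v (t *\<^sub>R y))$j = t * (M *v y)$j"
  by (simp add: matrix_vector_mult_scaleR)

lemma feedback_solution_bound:
  assumes D: "\<Delta> \<in> unc_set blk" and nF: "nonneg_mat F"
    and d: "\<forall>j. 0 < d (blk j)"
    and small_gain: "\<forall>j. \<beta>$j + (F *v (\<chi> j. d (blk j)))$j < d (blk j)"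
    and \<beta>: "\<forall>j. 0 \<le> \<beta>$j" and t: "0 \<le> t" and b: "\<forall>j. cmod (b$j) \<le> t * \<beta>$j"
    and z: "z = b + cmat F *v (\<Delta> *v z)"
  shows "cmod (z$j) \<le> t * d (blk j)"
proof -
  define \<mu> where "\<mu> = (\<chi> j. d (blk j))"
  obtain s j0 where "0 \<le> s" and zs: "\<forall>j. cmod (z$j) \<le> s * \<mu>$j"
    and zj0: "cmod (z$j0) = s * \<mu>$j0"
    using weighted_max_attained[of \<mu> z] d by (auto simp: \<mu>_def)
  show ?thesis
  proof (cases "s \<le> t")
    case True
    then show ?thesis
      using zs[rule_format, of j] d by (auto simp: \<mu>_def intro: order_trans mult_right_mono less_imp_le)
  next
    case False
    have "cmod ((\<Delta> *v z)$j) \<le> (s *\<^sub>R \<mu>)$j" for j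
      using norm_unc_mult_le[OF D, of z "\<lambda>k. s * d k"] zs by (simp add: \<mu>_def)
    then have "cmod ((cmat F *v (\<Delta> *v z))$j0) \<le> s * (F *v \<mu>)$j0"
      using norm_cmat_mult_le[OF nF] by (metis matrix_vector_mult_scaleR_nth)
    moreover have "cmod (z$j0) \<le> cmod (b$j0) + cmod ((cmat F *v (\<Delta> *v z))$j0)"
      by (subst z) (simp add: norm_triangle_ineq)
    moreover have "t * \<beta>$j0 \<le> s * \<beta>$j0"
      using False \<beta> by (simp add: mult_right_mono)
    ultimately have "s * \<mu>$j0 \<le> s * (\<beta>$j0 + (F *v \<mu>)$j0)"
      using zj0 b[rule_format, of j0] by (simp add: distrib_left)
    moreover have "s * (\<beta>$j0 + (F *v \<mu>)$j0) < s * \<mu>$j0"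
      using small_gain False t by (simp add: \<mu>_def)
    ultimately show ?thesis
      by simp
  qed
qed

lemma invertible_feedback:
  assumes D: "\<Delta> \<in> unc_set blk" and nF: "nonneg_mat F"
    and d: "\<forall>j. 0 < d (blk j)" and small_gain: "\<forall>j. (F *v (\<chi> j. d (blk j)))$j < d (blk j)"
  shows "invertible (mat 1 - cmat F ** \<Delta>)"
  unfolding invertible_left_inverse matrix_left_invertible_ker
proof (intro allI impI)
  fix z assume "(mat 1 - cmat F ** \<Delta>) *v z = 0"
  then have "z = 0 + cmat F *v (\<Delta> *v z)"
    by (simp add: matrix_vector_mult_diff_rdistrib matrix_vector_mul_assoc)
  from feedback_solution_bound[OF D nF d _ _ order_refl _ this, of 0]
  have "cmod (z$j) \<le> 0" for j
    using small_gain by simp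
  then show "z = 0"
    by (simp add: vec_eq_iff)
qed

lemma metzler_row_dominance_Re_neg:
  assumes mA: "metzler A" and lam: "\<forall>k. 0 < lam$k" and t: "0 < t"
    and v: "\<forall>k. cmod (v$k) \<le> t * lam$k" and vi: "cmod (v$i) = t * lam$i"
    and eig: "s * v$i = (cmat A *v v)$i + e" and e: "cmod e \<le> t * \<beta>"
    and row: "(A *v lam)$i + \<beta> < 0"
  shows "Re s < 0"
proof -
  let ?a = "A$i$i" and ?R = "UNIV - {i}"
  have eq: "(s - complex_of_real ?a) * v$i = (\<Sum>k\<in>?R. complex_of_real (A$i$k) * v$k) + e"
    using eig by (simp add: matrix_vector_mult_def cmat_def sum.remove algebra_simps)
  have "cmod (s - complex_of_real ?a) * (t * lam$i) = cmod ((s - complex_of_real ?a) * v$i)"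
    by (simp add: norm_mult vi)
  also have "\<dots> \<le> cmod (\<Sum>k\<in>?R. complex_of_real (A$i$k) * v$k) + cmod e"
    unfolding eq by (rule norm_triangle_ineq)
  also have "\<dots> \<le> (\<Sum>k\<in>?R. cmod (complex_of_real (A$i$k) * v$k)) + cmod e"
    by (rule add_mono[OF norm_sum order_refl])
  also have "\<dots> \<le> (\<Sum>k\<in>?R. A$i$k * (t * lam$k)) + t * \<beta>"
    using mA v e by (intro add_mono sum_mono) (auto simp: metzler_def norm_mult mult_left_mono)
  also have "\<dots> = t * ((A *v lam)$i - ?a * lam$i + \<beta>)"
    by (simp add: matrix_vector_mult_def sum.remove sum_distrib_left algebra_simps)
  also have "\<dots> < (- ?a) * (t * lam$i)"
    using mult_strict_left_mono[OF row t] by (simp add: algebra_simps)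
  finally have "cmod (s - complex_of_real ?a) < - ?a"
    by (rule mult_right_less_imp_less) (use t lam in \<open>simp add: less_imp_le\<close>)
  then show ?thesis
    using complex_Re_le_cmod[of "s - complex_of_real ?a"] by simp
qed

lemma matrix_inv_right:
  fixes X :: "'a::field^'n::finite^'n"
  assumes "invertible X"
  shows "X ** matrix_inv X = mat 1"
  using someI_ex[OF assms[unfolded invertible_def]] unfolding matrix_inv_def by auto

lemma hurwitz_feedback:
  assumes mA: "metzler A" and nE: "nonneg_mat E" and nC: "nonneg_mat C" and nF: "nonneg_mat F"
    and D: "\<Delta> \<in> unc_set blk" and inv: "invertible (mat 1 - cmat F ** \<Delta>)"
    and lam: "\<forall>i. 0 < lam$i" and d: "\<forall>j. 0 < d (blk j)"
    and row: "\<forall>i. (A *v lam + E *v (\<chi> j. d (blk j)))$i < 0"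
    and small_gain: "\<forall>j. (C *v lam)$j + (F *v (\<chi> j. d (blk j)))$j < d (blk j)"
  shows "hurwitz (cmat A + cmat E ** \<Delta> ** matrix_inv (mat 1 - cmat F ** \<Delta>) ** cmat C)"
  unfolding hurwitz_def
proof (intro allI impI, elim conjE)
  fix s v
  assume v0: "v \<noteq> 0"
    and eig: "(cmat A + cmat E ** \<Delta> ** matrix_inv (mat 1 - cmat F ** \<Delta>) ** cmat C) *v v = s *s v"
  define z where "z = matrix_inv (mat 1 - cmat F ** \<Delta>) *v (cmat C *v v)"
  define w where "w = \<Delta> *v z"
  have "(mat 1 - cmat F ** \<Delta>) *v z = cmat C *v v"
    unfolding z_def matrix_vector_mul_assoc matrix_mul_assoc matrix_inv_right[OF inv] by simp
  then have z: "z = cmat C *v v + cmat F *v (\<Delta> *v z)"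
    by (simp add: matrix_vector_mult_diff_rdistrib matrix_vector_mul_assoc algebra_simps)
  have "s *s v = cmat A *v v + cmat E *v w"
    using eig unfolding w_def z_def
    by (simp add: matrix_vector_mult_add_rdistrib matrix_vector_mul_assoc matrix_mul_assoc)
  then have eig_i: "s * v$i = (cmat A *v v)$i + (cmat E *v w)$i" for i
    by (metis vector_add_component vector_smult_component)
  obtain t i0 where t: "0 \<le> t" and v: "\<forall>k. cmod (v$k) \<le> t * lam$k"
    and vi0: "cmod (v$i0) = t * lam$i0"
    using weighted_max_attained[OF lam, of v] by blast
  have "t \<noteq> 0"
    using v v0 by (auto simp: vec_eq_iff)
  with t have t_pos: "0 < t" by simp
  have "cmod ((cmat C *v v)$j) \<le> t * (C *v lam)$j" for j
    using norm_cmat_mult_le[OF nC, of v "t *\<^sub>R lam"] v by (simp add: matrix_vector_mult_scaleR)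
  then have "cmod (z$j) \<le> t * d (blk j)" for j
    using feedback_solution_bound[OF D nF d _ _ t _ z] small_gain nonneg_mat_mult_nonneg[OF nC] lam
    by (simp add: less_imp_le)
  then have "cmod (w$j) \<le> (t *\<^sub>R (\<chi> j. d (blk j)))$j" for j
    unfolding w_def using norm_unc_mult_le[OF D, of z "\<lambda>k. t * d k"] by simp
  then have "cmod ((cmat E *v w)$i0) \<le> t * (E *v (\<chi> j. d (blk j)))$i0"
    using norm_cmat_mult_le[OF nE] by (metis matrix_vector_mult_scaleR_nth)
  then show "Re s < 0"
    using metzler_row_dominance_Re_neg[OF mA lam t_pos v vi0 eig_i] row by simp
qed

lemma asym_stable_if_feasible:
  assumes mA: "metzler A" and nE: "nonneg_mat E" and nC: "nonneg_mat C" and nF: "nonneg_mat F"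
    and lam: "\<forall>i. 0 < lam$i" and d: "\<forall>k. 0 < d k"
    and row: "\<forall>i. (A *v lam + E *v (\<chi> j. d (blk j)))$i < 0"
    and col: "\<forall>j. (C *v lam + (F - mat 1) *v (\<chi> j. d (blk j)))$j < 0"
    and D: "\<Delta> \<in> unc_set blk"
  shows "asym_stable A E C F \<Delta>"
proof -
  have d': "\<forall>j. 0 < d (blk j)"
    using d by simp
  have small_gain: "(C *v lam)$j + (F *v (\<chi> j. d (blk j)))$j < d (blk j)" for j
    using col[rule_format, of j] by (simp add: matrix_vector_mult_diff_rdistrib)
  have C_lam: "0 \<le> (C *v lam)$j" for j
    using nonneg_mat_mult_nonneg[OF nC] lam by (simp add: less_imp_le)
  have "(F *v (\<chi> j. d (blk j)))$j < d (blk j)" for j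
    using small_gain[of j] C_lam[of j] by linarith
  then have inv: "invertible (mat 1 - cmat F ** \<Delta>)"
    by (rule invertible_feedback[OF D nF d' allI])
  show ?thesis
    unfolding asym_stable_def
    using inv hurwitz_feedback[OF mA nE nC nF D inv lam d' row allI[OF small_gain]] by blast
qed

section \<open>Block vectors and matrices\<close>

definition vec_append :: "'a^'m \<Rightarrow> 'a^'n \<Rightarrow> 'a^('m + 'n)" where
  "vec_append x y = (\<chi> a. case a of Inl i \<Rightarrow> x$i | Inr j \<Rightarrow> y$j)"

definition block_mat ::
  "'a^'n^'m \<Rightarrow> 'a^'q^'m \<Rightarrow> 'a^'n^'p \<Rightarrow> 'a^'q^'p \<Rightarrow> 'a^('n + 'q)^('m + 'p)" where
  "block_mat A B C D = (\<chi> a. case a of Inl i \<Rightarrow> vec_append (A$i) (B$i) | Inr j \<Rightarrow> vec_append (C$j) (D$j))"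

lemma vec_append_nth [simp]:
  "vec_append x y $ Inl i = x$i" "vec_append x y $ Inr j = y$j"
  by (simp_all add: vec_append_def)

lemma vec_append_split: "vec_append (\<chi> i. x$Inl i) (\<chi> j. x$Inr j) = x"
  by (simp add: vec_eq_iff vec_append_def split: sum.split)

lemma vec_append_eq_iff [simp]: "vec_append x y = vec_append x' y' \<longleftrightarrow> x = x' \<and> y = y'"
  by (auto simp: vec_eq_iff vec_append_def split: sum.split)

lemma vec_append_eq_0_iff [simp]: "vec_append x y = 0 \<longleftrightarrow> x = 0 \<and> y = 0"
  by (auto simp: vec_eq_iff vec_append_def split: sum.split)

lemma scaleR_vec_append: "c *\<^sub>R vec_append x y = vec_append (c *\<^sub>R x) (c *\<^sub>R y)"
  by (simp add: vec_eq_iff vec_append_def split: sum.split)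

lemma sum_UNIV_Plus:
  "(\<Sum>a\<in>(UNIV :: ('m::finite + 'n::finite) set). f a) = (\<Sum>i\<in>UNIV. f (Inl i)) + (\<Sum>j\<in>UNIV. f (Inr j))"
  using sum.Plus[of "UNIV :: 'm set" "UNIV :: 'n set" f] by (simp add: o_def)

lemma block_mat_mult_vec_append:
  fixes A :: "'a::semiring_1^'n::finite^'m::finite" and D :: "'a^'q::finite^'p::finite"
  shows "block_mat A B C D *v vec_append x y = vec_append (A *v x + B *v y) (C *v x + D *v y)"
  by (simp add: vec_eq_iff block_mat_def matrix_vector_mult_def sum_UNIV_Plus split: sum.split)

lemma vec_append_mult_block_mat:
  fixes A :: "'a::semiring_1^'n::finite^'m::finite" and D :: "'a^'q::finite^'p::finite"
  shows "vec_append p r v* block_mat A B C D = vec_append (p v* A + r v* C) (p v* B + r v* D)"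
  unfolding vec_eq_iff
proof
  fix a :: "'n + 'q"
  show "(vec_append p r v* block_mat A B C D) $ a = vec_append (p v* A + r v* C) (p v* B + r v* D) $ a"
    by (cases a) (simp_all add: block_mat_def vector_matrix_mult_def sum_UNIV_Plus)
qed

lemma metzler_block_mat:
  "metzler A \<Longrightarrow> nonneg_mat B \<Longrightarrow> nonneg_mat C \<Longrightarrow> metzler D \<Longrightarrow> metzler (block_mat A B C D)"
  by (auto simp: metzler_def nonneg_mat_def block_mat_def vec_append_def split: sum.split)

lemma metzler_transpose: "metzler (transpose M) \<longleftrightarrow> metzler M"
  by (auto simp: metzler_def transpose_def)

lemma metzler_diff_mat: "nonneg_mat M \<Longrightarrow> metzler (M - mat c)"
  by (simp add: metzler_def nonneg_mat_def mat_def)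

lemma nonneg_mat_mult: "nonneg_mat M \<Longrightarrow> nonneg_mat N \<Longrightarrow> nonneg_mat (M ** N)"
  by (auto simp: nonneg_mat_def matrix_matrix_mult_def intro!: sum_nonneg)

lemma selection_matrix_mult_vec:
  "(\<chi> a b. if b = f a then 1 else 0) *v x = (\<chi> a. (x$(f a) :: 'a::semiring_1))"
proof -
  have "(\<Sum>b\<in>UNIV. (if b = f a then 1 else 0) * x$b) = (\<Sum>b\<in>UNIV. if b = f a then x$b else 0)" for a
    by (rule sum.cong) auto
  then show ?thesis
    by (simp add: vec_eq_iff matrix_vector_mult_def)
qed

lemma vec_mult_selection_matrix:
  "y v* (\<chi> a b. if b = f a then 1 else 0) = (\<chi> b. (\<Sum>a\<in>{a. f a = b}. y$a :: 'a::semiring_1))"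
proof -
  have "(\<Sum>a\<in>UNIV. y$a * (if b = f a then 1 else 0)) = (\<Sum>a\<in>{a. f a = b}. y$a)" for b
    using sum.inter_filter[of UNIV "\<lambda>a. y$a" "\<lambda>a. f a = b"] by (auto intro: sum.cong)
  then show ?thesis
    by (simp add: vec_eq_iff vector_matrix_mult_def)
qed

section \<open>Gordan's alternative and nonnegative eigenvectors\<close>

lemma nonneg_if_nonneg_plus_pos_multiples:
  fixes b c :: real
  assumes "\<forall>t>0. 0 \<le> b + t * c"
  shows "0 \<le> b"
proof (rule ccontr)
  assume "\<not> 0 \<le> b"
  define t where "t = - b / (2 * (\<bar>c\<bar> + 1))"
  have t: "0 < t"
    unfolding t_def using \<open>\<not> 0 \<le> b\<close> by (intro divide_pos_pos) auto
  have "t * c \<le> t * (\<bar>c\<bar> + 1)"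
    using t by (intro mult_left_mono) auto
  also have "\<dots> = - b / 2"
    unfolding t_def by (simp add: field_simps add_pos_nonneg)
  finally have "b + t * c < 0"
    using \<open>\<not> 0 \<le> b\<close> by linarith
  then show False
    using assms t by force
qed

theorem gordan_alternative:
  fixes G :: "real^'n::finite^'m::finite"
  assumes "\<nexists>x. (\<forall>i. 0 < x$i) \<and> (\<forall>i. (G *v x)$i < 0)"
  obtains c where "c \<noteq> 0" "\<forall>i. 0 \<le> c$i" "\<forall>k. 0 \<le> (c v* G)$k"
proof -
  define S where "S = {G *v x + y | x y. (\<forall>i. 0 < x$i) \<and> (\<forall>i. 0 < y$i)}"
  have "convex S"
    unfolding convex_def S_def
  proof clarify
    fix x1 x2 :: "real^'n" and y1 y2 :: "real^'m" and u v :: real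
    assume pos: "\<forall>i. 0 < x1$i" "\<forall>i. 0 < y1$i" "\<forall>i. 0 < x2$i" "\<forall>i. 0 < y2$i"
      and uv: "0 \<le> u" "0 \<le> v" "u + v = 1"
    have comb: "0 < u * a + v * b" if "0 < a" "0 < b" for a b :: real
      using that uv by (cases "u = 0") (auto intro: add_pos_nonneg)
    show "\<exists>x y. u *\<^sub>R (G *v x1 + y1) + v *\<^sub>R (G *v x2 + y2) = G *v x + y
        \<and> (\<forall>i. 0 < x$i) \<and> (\<forall>i. 0 < y$i)"
    proof (intro exI conjI)
      show "u *\<^sub>R (G *v x1 + y1) + v *\<^sub>R (G *v x2 + y2)
          = G *v (u *\<^sub>R x1 + v *\<^sub>R x2) + (u *\<^sub>R y1 + v *\<^sub>R y2)"
        by (simp add: matrix_vector_right_distrib matrix_vector_mult_scaleR algebra_simps)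
      show "\<forall>i. 0 < (u *\<^sub>R x1 + v *\<^sub>R x2)$i" "\<forall>i. 0 < (u *\<^sub>R y1 + v *\<^sub>R y2)$i"
        using pos comb by simp_all
    qed
  qed
  moreover have "0 \<notin> S"
  proof
    assume "0 \<in> S"
    then obtain x y where "G *v x + y = 0" "\<forall>i. 0 < x$i" "\<forall>i. 0 < y$i"
      unfolding S_def by auto
    then have "\<forall>i. (G *v x)$i < 0"
      by (metis add.commute add_less_same_cancel1 vector_add_component zero_index)
    with \<open>\<forall>i. 0 < x$i\<close> assms show False by blast
  qed
  ultimately obtain a where "a \<noteq> 0" and a: "\<forall>s\<in>S. 0 \<le> inner a s"
    using separating_hyperplane_set_0 by blast
  have sep: "0 \<le> a \<bullet> (G *v x) + a \<bullet> y" if "\<forall>i. 0 < x$i" "\<forall>i. 0 < y$i" for x y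
    using a that unfolding S_def by (auto simp flip: inner_add_right)
  have adj: "a \<bullet> (G *v x) = (a v* G) \<bullet> x" for x
    by (simp add: inner_vec_def matrix_vector_mult_def vector_matrix_mult_def
        sum_distrib_left sum_distrib_right mult_ac) (rule sum.swap)
  define \<kappa> where "\<kappa> = a \<bullet> (G *v (\<chi> i. 1)) + a \<bullet> (\<chi> i. 1)"
  have "0 \<le> (a v* G)$k + t * \<kappa>" if "0 < t" for k t
  proof -
    have "0 \<le> a \<bullet> (G *v (axis k 1 + t *\<^sub>R (\<chi> i. 1))) + a \<bullet> (t *\<^sub>R (\<chi> i. 1))"
      by (rule sep) (use that in \<open>auto simp: axis_def add_pos_nonneg\<close>)
    then show ?thesis
      by (simp add: \<kappa>_def adj inner_axis inner_add_right matrix_vector_right_distrib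
          matrix_vector_mult_scaleR algebra_simps)
  qed
  then have "0 \<le> (a v* G)$k" for k
    by (intro nonneg_if_nonneg_plus_pos_multiples) auto
  moreover have "0 \<le> a$k + t * \<kappa>" if "0 < t" for k t
  proof -
    have "0 \<le> a \<bullet> (G *v (t *\<^sub>R (\<chi> i. 1))) + a \<bullet> (axis k 1 + t *\<^sub>R (\<chi> i. 1))"
      by (rule sep) (use that in \<open>auto simp: axis_def add_pos_nonneg\<close>)
    then show ?thesis
      by (simp add: \<kappa>_def inner_axis inner_add_right matrix_vector_mult_scaleR algebra_simps)
  qed
  then have "0 \<le> a$k" for k
    by (intro nonneg_if_nonneg_plus_pos_multiples) auto
  ultimately show ?thesis
    using that \<open>a \<noteq> 0\<close> by blast
qed

lemma brouwer_eigenvector: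
  fixes H :: "real^'m::finite^'m"
  assumes K: "compact K" "convex K" "K \<noteq> {}"
    and pos: "\<forall>w\<in>K. 0 < (\<Sum>i\<in>UNIV. (H *v w)$i)"
    and maps: "\<forall>w\<in>K. (1 / (\<Sum>i\<in>UNIV. (H *v w)$i)) *\<^sub>R (H *v w) \<in> K"
  obtains w where "w \<in> K" "H *v w = (\<Sum>i\<in>UNIV. (H *v w)$i) *\<^sub>R w"
proof -
  define f where "f w = (1 / (\<Sum>i\<in>UNIV. (H *v w)$i)) *\<^sub>R (H *v w)" for w
  have "continuous_on K f"
    unfolding f_def using pos by (intro continuous_intros) auto
  then obtain w where w: "w \<in> K" "f w = w"
    using brouwer[OF K] maps unfolding f_def by blast
  have "H *v w = (\<Sum>i\<in>UNIV. (H *v w)$i) *\<^sub>R f w"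
    using pos w(1) by (auto simp: f_def)
  then show ?thesis
    using that w by simp
qed

lemma compact_convex_normalized_nonneg_cone:
  fixes N :: "real^'m::finite^'m"
  defines "K \<equiv> {w. (\<forall>i. 0 \<le> w$i) \<and> (\<Sum>i\<in>UNIV. w$i) = 1 \<and> (\<forall>i. 0 \<le> (N *v w)$i)}"
  shows "compact K" "convex K"
proof -
  have "norm w \<le> 1" if "w \<in> K" for w
    using norm_le_l1_cart[of w] that unfolding K_def by simp
  then have "bounded K"
    unfolding bounded_iff by blast
  moreover have "closed K"
    unfolding K_def
    by (intro closed_Collect_conj closed_Collect_all closed_Collect_le closed_Collect_eq continuous_intros)
  ultimately show "compact K"
    by (simp add: compact_eq_bounded_closed)
  show "convex K"
    unfolding convex_def K_def
    by (auto simp: matrix_vector_right_distrib matrix_vector_mult_scaleR sum.distrib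
        simp flip: sum_distrib_left)
qed

lemma metzler_shift_nonneg:
  fixes N :: "real^'m::finite^'m"
  assumes "metzler N"
  obtains c where "1 \<le> c" "nonneg_mat (N + c *\<^sub>R mat 1)"
proof
  let ?c = "1 + (\<Sum>i\<in>UNIV. \<bar>N$i$i\<bar>)"
  have "\<bar>N$i$i\<bar> \<le> (\<Sum>i\<in>UNIV. \<bar>N$i$i\<bar>)" for i
    by (rule member_le_sum) auto
  then have "0 \<le> ?c + N$i$i" for i
    by (smt (verit))
  then show "nonneg_mat (N + ?c *\<^sub>R mat 1)"
    using assms by (auto simp: nonneg_mat_def metzler_def mat_def add.commute)
  show "1 \<le> ?c"
    by (simp add: sum_nonneg)
qed

lemma sum_pos_if_nonneg_nonzero:
  fixes y :: "real^'m::finite"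
  assumes "\<forall>i. 0 \<le> y$i" "y \<noteq> 0"
  shows "0 < (\<Sum>i\<in>UNIV. y$i)"
proof -
  obtain i where "y$i \<noteq> 0"
    using assms by (auto simp: vec_eq_iff)
  then show ?thesis
    using assms by (intro sum_pos2[where i=i]) (auto simp: order_le_neq_trans)
qed

lemma metzler_nonneg_eigenvector:
  fixes N :: "real^'m::finite^'m"
  assumes mN: "metzler N" and y: "\<forall>i. 0 \<le> y$i" "y \<noteq> 0" and Ny: "\<forall>i. 0 \<le> (N *v y)$i"
  obtains v \<sigma> where "\<forall>i. 0 \<le> v$i" "v \<noteq> 0" "0 \<le> \<sigma>" "N *v v = \<sigma> *\<^sub>R v"
proof -
  obtain c where c: "1 \<le> c" and H: "nonneg_mat (N + c *\<^sub>R mat 1)"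
    using metzler_shift_nonneg[OF mN] by blast
  define H where "H = N + c *\<^sub>R mat 1"
  have Hv: "H *v w = N *v w + c *\<^sub>R w" for w
    by (simp add: H_def matrix_vector_mult_add_rdistrib flip: scaleR_matrix_vector_assoc)
  define K where "K = {w. (\<forall>i. 0 \<le> w$i) \<and> (\<Sum>i\<in>UNIV. w$i) = 1 \<and> (\<forall>i. 0 \<le> (N *v w)$i)}"
  have sum_H: "c \<le> (\<Sum>i\<in>UNIV. (H *v w)$i)" if "w \<in> K" for w
  proof -
    have "c = (\<Sum>i\<in>UNIV. c * w$i)"
      using that unfolding K_def by (simp flip: sum_distrib_left)
    also have "\<dots> \<le> (\<Sum>i\<in>UNIV. (H *v w)$i)"
      using that unfolding K_def Hv by (intro sum_mono) auto
    finally show ?thesis .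
  qed
  have maps: "\<forall>w\<in>K. (1 / (\<Sum>i\<in>UNIV. (H *v w)$i)) *\<^sub>R (H *v w) \<in> K"
  proof
    fix w assume w: "w \<in> K"
    have "0 < (\<Sum>i\<in>UNIV. (H *v w)$i)"
      using sum_H[OF w] c by linarith
    moreover have "N *v (H *v w) = H *v (N *v w)"
      by (simp add: Hv matrix_vector_right_distrib matrix_vector_mult_scaleR)
    ultimately show "(1 / (\<Sum>i\<in>UNIV. (H *v w)$i)) *\<^sub>R (H *v w) \<in> K"
      using w nonneg_mat_mult_nonneg[OF H] unfolding K_def H_def
      by (auto simp: matrix_vector_mult_scaleR simp flip: sum_divide_distrib)
  qed
  have "(1 / (\<Sum>i\<in>UNIV. y$i)) *\<^sub>R y \<in> K"
    using y Ny sum_pos_if_nonneg_nonzero[OF y] unfolding K_def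
    by (auto simp: matrix_vector_mult_scaleR simp flip: sum_divide_distrib)
  then have "K \<noteq> {}"
    by blast
  moreover have "compact K" "convex K"
    unfolding K_def by (fact compact_convex_normalized_nonneg_cone)+
  moreover have "\<forall>w\<in>K. 0 < (\<Sum>i\<in>UNIV. (H *v w)$i)"
    using sum_H c by fastforce
  ultimately obtain w where w: "w \<in> K" and Hw: "H *v w = (\<Sum>i\<in>UNIV. (H *v w)$i) *\<^sub>R w"
    using brouwer_eigenvector[of K H] maps by blast
  define \<rho> where "\<rho> = (\<Sum>i\<in>UNIV. (H *v w)$i)"
  have "N *v w = H *v w - c *\<^sub>R w"
    by (simp add: Hv)
  also have "\<dots> = (\<rho> - c) *\<^sub>R w"
    unfolding \<rho>_def scaleR_diff_left by (subst Hw) (rule refl)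
  finally have "N *v w = (\<rho> - c) *\<^sub>R w" .
  moreover have "0 \<le> \<rho> - c"
    using sum_H[OF w] by (simp add: \<rho>_def)
  moreover have "w \<noteq> 0"
    using w by (auto simp: K_def)
  ultimately show ?thesis
    using that w unfolding K_def by blast
qed

section \<open>Necessity: a destabilizing uncertainty\<close>

definition cvec :: "real^'n \<Rightarrow> complex^'n" where
  "cvec x = (\<chi> i. complex_of_real (x$i))"

lemma cvec_nth [simp]: "cvec x $ i = complex_of_real (x$i)"
  by (simp add: cvec_def)

lemma cvec_zero [simp]: "cvec 0 = 0"
  by (simp add: vec_eq_iff)

lemma cvec_eq_0_iff [simp]: "cvec x = 0 \<longleftrightarrow> x = 0"
  by (simp add: vec_eq_iff)

lemma cvec_add: "cvec (x + y) = cvec x + cvec y"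
  by (simp add: vec_eq_iff)

lemma cvec_scaleR: "cvec (a *\<^sub>R x) = complex_of_real a *s cvec x"
  by (simp add: vec_eq_iff)

lemma cvec_vector_mult_cmat: "cvec x v* cmat M = cvec (x v* M)"
  by (simp add: vec_eq_iff vector_matrix_mult_def cmat_def)

lemma cmat_mult: "cmat M ** cmat N = cmat (M ** N)"
  by (simp add: vec_eq_iff matrix_matrix_mult_def cmat_def)

lemma feedback_left_eigenvector:
  fixes A :: "'a::field^'n::finite^'n" and E :: "'a^'q::finite^'n" and C :: "'a^'n^'q"
    and F \<Delta> :: "'a^'q^'q"
  assumes inv: "invertible (mat 1 - F ** \<Delta>)"
    and PA: "P v* A + R v* C = s *s P"
    and R: "R = P v* (E ** \<Delta>) + R v* (F ** \<Delta>)"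
  shows "R = (P v* (E ** \<Delta>)) v* matrix_inv (mat 1 - F ** \<Delta>)"
    and "P v* (A + E ** \<Delta> ** matrix_inv (mat 1 - F ** \<Delta>) ** C) = s *s P"
proof -
  have "R v* (mat 1 - F ** \<Delta>) = P v* (E ** \<Delta>)"
    using R by (simp add: vector_matrix_mult_diff_rdistrib algebra_simps)
  then show R_eq: "R = (P v* (E ** \<Delta>)) v* matrix_inv (mat 1 - F ** \<Delta>)"
    by (metis matrix_inv_right[OF inv] vector_matrix_mul_assoc vector_matrix_mul_rid)
  show "P v* (A + E ** \<Delta> ** matrix_inv (mat 1 - F ** \<Delta>) ** C) = s *s P"
    using PA R_eq by (simp add: vector_matrix_mult_add_rdistrib vector_matrix_mul_assoc)
qed

lemma mat_mult_vector: "mat k *v w = k *s w" for w :: "'a::comm_ring_1^'n::finite"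
  by (simp add: vec_eq_iff matrix_vector_mult_def mat_def if_distrib if_distribR cong del: if_weak_cong)

lemma vector_mult_mat: "w v* mat k = k *s w" for w :: "'a::comm_ring_1^'n::finite"
  by (simp add: vec_eq_iff vector_matrix_mult_def mat_def if_distrib if_distribR mult.commute
      cong del: if_weak_cong)

lemma hurwitz_left_eigenvalue:
  assumes K: "hurwitz K" and P: "P \<noteq> 0" "P v* K = s *s P"
  shows "Re s < 0"
proof -
  have "P v* (K - mat s) = 0"
    using P by (simp add: vector_matrix_mult_diff_rdistrib vector_mult_mat)
  then have "\<not> invertible (K - mat s)"
    using P by (metis invertible_def vector_matrix_mul_assoc vector_matrix_mul_rid vector_matrix_mult_0)
  then obtain w where "w \<noteq> 0" "(K - mat s) *v w = 0"
    unfolding invertible_left_inverse matrix_left_invertible_ker by blast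
  then show ?thesis
    using K unfolding hurwitz_def
    by (metis eq_iff_diff_eq_0 matrix_vector_mult_diff_rdistrib mat_mult_vector)
qed

lemma block_stochastic_dominating:
  fixes r h :: "real^'q::finite" and blk :: "'q \<Rightarrow> 'b"
  assumes r: "\<forall>j. 0 \<le> r$j" and h: "\<forall>j. 0 \<le> h$j"
    and dom: "\<forall>i. (\<Sum>j\<in>{j. blk j = blk i}. r$j) \<le> (\<Sum>j\<in>{j. blk j = blk i}. h$j)"
  obtains \<Delta> :: "real^'q^'q" where "nonneg_mat \<Delta>" "\<forall>i j. blk i \<noteq> blk j \<longrightarrow> \<Delta>$i$j = 0"
    "\<forall>i. (\<Sum>j\<in>{j. blk j = blk i}. \<Delta>$i$j) = 1" "\<forall>j. r$j \<le> (h v* \<Delta>)$j"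
proof -
  define s where "s j = (\<Sum>l\<in>{l. blk l = blk j}. r$l)" for j
  define u where "u j = (if 0 < s j then r$j / s j else 1 / card {l. blk l = blk j})" for j
  define \<Delta> :: "real^'q^'q" where "\<Delta> = (\<chi> i j. if blk i = blk j then u j else 0)"
  have s: "0 \<le> s j" for j
    unfolding s_def using r by (simp add: sum_nonneg)
  have u: "0 \<le> u j" for j
    unfolding u_def using r s by simp
  have s_blk: "s j = s i" if "j \<in> {j. blk j = blk i}" for i j
    using that by (simp add: s_def)
  have "(\<Sum>j\<in>{j. blk j = blk i}. u j) = 1" for i
  proof (cases "0 < s i")
    case True
    have "(\<Sum>j\<in>{j. blk j = blk i}. u j) = (\<Sum>j\<in>{j. blk j = blk i}. r$j / s i)"
    proof (rule sum.cong[OF refl])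
      fix j assume "j \<in> {j. blk j = blk i}"
      then show "u j = r$j / s i"
        using True s_blk[of j i] by (simp add: u_def)
    qed
    with True show ?thesis
      by (simp add: s_def flip: sum_divide_distrib)
  next
    case False
    have "(\<Sum>j\<in>{j. blk j = blk i}. u j) = (\<Sum>j\<in>{j. blk j = blk i}. 1 / card {l. blk l = blk i})"
    proof (rule sum.cong[OF refl])
      fix j assume "j \<in> {j. blk j = blk i}"
      then show "u j = 1 / card {l. blk l = blk i}"
        using False s_blk[of j i] by (simp add: u_def)
    qed
    moreover have "card {l. blk l = blk i} \<noteq> 0"
      by (auto simp: card_eq_0_iff)
    ultimately show ?thesis
      by simp
  qed
  moreover have "r$j \<le> (h v* \<Delta>)$j" for j
  proof -
    have "(h v* \<Delta>)$j = u j * (\<Sum>l\<in>{l. blk l = blk j}. h$l)"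
      unfolding \<Delta>_def vector_matrix_mult_def
      by (simp add: sum_distrib_left sum.inter_filter[symmetric] mult.commute if_distrib cong: if_cong)
    moreover have "r$j \<le> u j * (\<Sum>l\<in>{l. blk l = blk j}. h$l)"
    proof (cases "0 < s j")
      case True
      then have "r$j = u j * s j"
        by (simp add: u_def)
      also have "\<dots> \<le> u j * (\<Sum>l\<in>{l. blk l = blk j}. h$l)"
        using dom u by (simp add: s_def mult_left_mono)
      finally show ?thesis .
    next
      case False
      then have "s j = 0"
        using s[of j] by simp
      then have "\<forall>l\<in>{l. blk l = blk j}. r$l = 0"
        using r by (simp add: s_def sum_nonneg_eq_0_iff)
      then have "r$j = 0"
        by simp
      then show ?thesis
        using u h by (simp add: sum_nonneg)
    qed
    ultimately show ?thesis
      by simp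
  qed
  moreover have "nonneg_mat \<Delta>" "\<forall>i j. blk i \<noteq> blk j \<longrightarrow> \<Delta>$i$j = 0"
    using u by (auto simp: nonneg_mat_def \<Delta>_def)
  ultimately show ?thesis
    using that by (auto simp: \<Delta>_def)
qed

lemma cmat_block_stochastic_in_unc_set:
  assumes "nonneg_mat \<Delta>" "\<forall>i j. blk i \<noteq> blk j \<longrightarrow> \<Delta>$i$j = 0"
    "\<forall>i. (\<Sum>j\<in>{j. blk j = blk i}. \<Delta>$i$j) = 1" and "0 \<le> \<theta>" "\<theta> \<le> 1"
  shows "cmat (\<theta> *\<^sub>R \<Delta>) \<in> unc_set blk"
proof -
  have "(\<Sum>j\<in>{j. blk j = blk i}. cmod (cmat (\<theta> *\<^sub>R \<Delta>)$i$j)) = \<theta>" for i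
    using assms by (simp add: cmat_def nonneg_mat_def norm_mult flip: sum_distrib_left)
  then show ?thesis
    using assms by (auto simp: unc_set_def cmat_def)
qed

lemma nonneg_feedback_real_left_eigenvector:
  fixes A :: "real^'n::finite^'n" and E :: "real^'q::finite^'n" and C :: "real^'n^'q"
    and F \<Delta> :: "real^'q^'q"
  assumes mA: "metzler A" and nE: "nonneg_mat E" and nC: "nonneg_mat C" and nF: "nonneg_mat F"
    and nD: "nonneg_mat \<Delta>" and p: "\<forall>i. 0 \<le> p$i" and r: "\<forall>j. 0 \<le> r$j" and pr: "p \<noteq> 0 \<or> r \<noteq> 0"
    and row: "\<forall>k. 0 \<le> (p v* A + r v* C)$k"
    and col: "\<forall>j. r$j \<le> ((p v* E + r v* F) v* \<Delta>)$j"
  obtains x y \<sigma> where "x \<noteq> 0 \<or> y \<noteq> 0" "0 \<le> \<sigma>" "x v* A + y v* C = \<sigma> *\<^sub>R x"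
    "x v* (E ** \<Delta>) + y v* (F ** \<Delta>) = (1 + \<sigma>) *\<^sub>R y"
proof -
  define M where "M = block_mat A (E ** \<Delta>) C (F ** \<Delta> - mat 1)"
  have metz: "metzler (transpose M)"
    unfolding M_def metzler_transpose using mA nE nC nF nD
    by (intro metzler_block_mat nonneg_mat_mult metzler_diff_mat)
  have Mc: "\<forall>a. 0 \<le> (transpose M *v vec_append p r)$a"
  proof
    fix a
    have "transpose M *v vec_append p r
        = vec_append (p v* A + r v* C) ((p v* E + r v* F) v* \<Delta> - r)"
      unfolding M_def transpose_matrix_vector vec_append_mult_block_mat vec_append_eq_iff
      by (simp add: vector_matrix_mult_diff_rdistrib vector_matrix_left_distrib
          vector_matrix_mul_assoc add_diff_eq)
    then show "0 \<le> (transpose M *v vec_append p r)$a"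
      using row col by (cases a) simp_all
  qed
  have c: "\<forall>a. 0 \<le> vec_append p r $ a"
    using p r by (simp add: vec_append_def split: sum.split)
  have nz: "vec_append p r \<noteq> 0"
    using pr by simp
  obtain v \<sigma> where v: "\<forall>a. 0 \<le> v$a" "v \<noteq> 0" "0 \<le> \<sigma>" "transpose M *v v = \<sigma> *\<^sub>R v"
    by (rule metzler_nonneg_eigenvector[OF metz c nz Mc])
  define x where "x = (\<chi> i. v$Inl i)"
  define y where "y = (\<chi> j. v$Inr j)"
  have v_eq: "v = vec_append x y"
    unfolding x_def y_def by (rule vec_append_split[symmetric])
  have "transpose M *v v = vec_append (x v* A + y v* C) (x v* (E ** \<Delta>) + y v* (F ** \<Delta>) - y)"
    unfolding v_eq M_def transpose_matrix_vector vec_append_mult_block_mat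
    by (simp add: vector_matrix_mult_diff_rdistrib add_diff_eq)
  then have "vec_append (x v* A + y v* C) (x v* (E ** \<Delta>) + y v* (F ** \<Delta>) - y)
      = vec_append (\<sigma> *\<^sub>R x) (\<sigma> *\<^sub>R y)"
    using v(4) unfolding v_eq scaleR_vec_append by simp
  then have "x v* A + y v* C = \<sigma> *\<^sub>R x" "x v* (E ** \<Delta>) + y v* (F ** \<Delta>) = (1 + \<sigma>) *\<^sub>R y"
    by (simp_all add: algebra_simps)
  moreover have "x \<noteq> 0 \<or> y \<noteq> 0"
    using v(2) unfolding v_eq by simp
  ultimately show ?thesis
    using that v(3) by blast
qed

lemma not_asym_stable_if_real_left_eigenvector:
  assumes xy: "x \<noteq> 0 \<or> y \<noteq> 0" and \<sigma>: "0 \<le> \<sigma>"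
    and eig: "x v* A + y v* C = \<sigma> *\<^sub>R x" and fb: "x v* (E ** \<Delta>) + y v* (F ** \<Delta>) = (1 + \<sigma>) *\<^sub>R y"
  shows "\<not> asym_stable A E C F (cmat ((1 / (1 + \<sigma>)) *\<^sub>R \<Delta>))"
proof
  define Dc where "Dc = cmat ((1 / (1 + \<sigma>)) *\<^sub>R \<Delta>)"
  assume "asym_stable A E C F (cmat ((1 / (1 + \<sigma>)) *\<^sub>R \<Delta>))"
  then have inv: "invertible (mat 1 - cmat F ** Dc)"
    and hur: "hurwitz (cmat A + cmat E ** Dc ** matrix_inv (mat 1 - cmat F ** Dc) ** cmat C)"
    unfolding asym_stable_def Dc_def by auto
  have "cvec x v* cmat A + cvec y v* cmat C = complex_of_real \<sigma> *s cvec x"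
    using eig by (simp add: cvec_vector_mult_cmat flip: cvec_add cvec_scaleR)
  moreover have "cvec y = cvec x v* (cmat E ** Dc) + cvec y v* (cmat F ** Dc)"
  proof -
    have "x v* (E ** ((1 / (1 + \<sigma>)) *\<^sub>R \<Delta>)) + y v* (F ** ((1 / (1 + \<sigma>)) *\<^sub>R \<Delta>))
        = (1 / (1 + \<sigma>)) *\<^sub>R (x v* (E ** \<Delta>) + y v* (F ** \<Delta>))"
      by (simp add: matrix_scalar_ac vector_scaleR_matrix_ac scaleR_add_right
          flip: scalar_matrix_assoc)
    also have "\<dots> = y"
      using \<sigma> by (simp add: fb)
    finally show ?thesis
      by (simp add: Dc_def cmat_mult cvec_vector_mult_cmat flip: cvec_add)
  qed
  ultimately have R: "cvec y = (cvec x v* (cmat E ** Dc)) v* matrix_inv (mat 1 - cmat F ** Dc)"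
    and P: "cvec x v* (cmat A + cmat E ** Dc ** matrix_inv (mat 1 - cmat F ** Dc) ** cmat C)
        = complex_of_real \<sigma> *s cvec x"
    using feedback_left_eigenvector[OF inv] by blast+
  have "cvec x \<noteq> 0"
  proof
    assume "cvec x = 0"
    then have "x = 0" "cvec y = 0"
      using R by simp_all
    with xy show False
      by simp
  qed
  then have "Re (complex_of_real \<sigma>) < 0"
    using hurwitz_left_eigenvalue[OF hur _ P] by blast
  with \<sigma> show False
    by simp
qed

lemma nonneg_vec_mult_nonneg:
  "nonneg_mat M \<Longrightarrow> \<forall>i. 0 \<le> p$i \<Longrightarrow> 0 \<le> (p v* M)$j"
  by (auto simp: vector_matrix_mult_def nonneg_mat_def intro!: sum_nonneg)

lemma unstable_if_dual_certificate:
  assumes mA: "metzler A" and nE: "nonneg_mat E" and nC: "nonneg_mat C" and nF: "nonneg_mat F"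
    and p: "\<forall>i. 0 \<le> p$i" and r: "\<forall>j. 0 \<le> r$j" and pr: "p \<noteq> 0 \<or> r \<noteq> 0"
    and row: "\<forall>k. 0 \<le> (p v* A + r v* C)$k"
    and blocks: "\<forall>i. (\<Sum>j\<in>{j. blk j = blk i}. r$j) \<le> (\<Sum>j\<in>{j. blk j = blk i}. (p v* E + r v* F)$j)"
  shows "\<exists>\<Delta>\<in>unc_set blk. \<not> asym_stable A E C F \<Delta>"
proof -
  have "\<forall>j. 0 \<le> (p v* E + r v* F)$j"
    using nonneg_vec_mult_nonneg[OF nE p] nonneg_vec_mult_nonneg[OF nF r] by simp
  then obtain \<Delta> where \<Delta>: "nonneg_mat \<Delta>" "\<forall>i j. blk i \<noteq> blk j \<longrightarrow> \<Delta>$i$j = 0"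
    "\<forall>i. (\<Sum>j\<in>{j. blk j = blk i}. \<Delta>$i$j) = 1" "\<forall>j. r$j \<le> ((p v* E + r v* F) v* \<Delta>)$j"
    using block_stochastic_dominating[OF r _ blocks] by blast
  obtain x y \<sigma> where "x \<noteq> 0 \<or> y \<noteq> 0" "0 \<le> \<sigma>" "x v* A + y v* C = \<sigma> *\<^sub>R x"
    "x v* (E ** \<Delta>) + y v* (F ** \<Delta>) = (1 + \<sigma>) *\<^sub>R y"
    by (rule nonneg_feedback_real_left_eigenvector[OF mA nE nC nF \<Delta>(1) p r pr row \<Delta>(4)])
  then have "\<not> asym_stable A E C F (cmat ((1 / (1 + \<sigma>)) *\<^sub>R \<Delta>))"
    by (rule not_asym_stable_if_real_left_eigenvector)
  moreover have "cmat ((1 / (1 + \<sigma>)) *\<^sub>R \<Delta>) \<in> unc_set blk"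
    using cmat_block_stochastic_in_unc_set[OF \<Delta>(1-3)] \<open>0 \<le> \<sigma>\<close> by simp
  ultimately show ?thesis
    by blast
qed

definition block_rep :: "('q \<Rightarrow> 'b) \<Rightarrow> 'q \<Rightarrow> 'q" where
  "block_rep blk j = (SOME j'. blk j' = blk j)"

lemma block_rep_eq_iff: "block_rep blk j = block_rep blk i \<longleftrightarrow> blk j = blk i"
proof
  have "blk (block_rep blk j) = blk j" for j
    unfolding block_rep_def by (rule someI_ex) blast
  then show "block_rep blk j = block_rep blk i \<Longrightarrow> blk j = blk i"
    by metis
qed (simp add: block_rep_def)

text \<open>Multiplication by \<open>lump_mat blk\<close> replaces every \<open>Inr\<close>-component by the one at the
  representative of its block, so that feasibility for block-constant weights \<open>d (blk j)\<close> becomes an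
  ordinary strict system to which Gordan's alternative applies.\<close>

definition lump_mat :: "('q::finite \<Rightarrow> 'b) \<Rightarrow> real^('n::finite + 'q)^('n + 'q)" where
  "lump_mat blk = (\<chi> a b. if b = map_sum id (block_rep blk) a then 1 else 0)"

lemma lump_mat_mult_vec:
  "lump_mat blk *v x = vec_append (\<chi> i. x$Inl i) (\<chi> j. x$Inr (block_rep blk j))"
  unfolding lump_mat_def selection_matrix_mult_vec vec_eq_iff
proof
  fix a
  show "(\<chi> a. x$map_sum id (block_rep blk) a) $ a
      = vec_append (\<chi> i. x$Inl i) (\<chi> j. x$Inr (block_rep blk j)) $ a"
    by (cases a) simp_all
qed

lemma vec_mult_lump_mat:
  "(y v* lump_mat blk)$Inl k = y$Inl k"
  "(y v* lump_mat blk)$Inr (block_rep blk i) = (\<Sum>j\<in>{j. blk j = blk i}. y$Inr j)"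
proof -
  have fiber_Inl: "{a. map_sum id (block_rep blk) a = Inl k} = {Inl k}"
    by (rule set_eqI, case_tac x) auto
  show "(y v* lump_mat blk)$Inl k = y$Inl k"
    unfolding lump_mat_def vec_mult_selection_matrix vec_lambda_beta fiber_Inl by simp
  have fiber_Inr: "{a. map_sum id (block_rep blk) a = Inr (block_rep blk i)} = Inr ` {j. blk j = blk i}"
    by (rule set_eqI, case_tac x) (auto simp: block_rep_eq_iff)
  show "(y v* lump_mat blk)$Inr (block_rep blk i) = (\<Sum>j\<in>{j. blk j = blk i}. y$Inr j)"
    unfolding lump_mat_def vec_mult_selection_matrix vec_lambda_beta fiber_Inr
    by (simp add: sum.reindex)
qed

lemma dual_certificate_if_infeasible:
  fixes A :: "real^'n::finite^'n" and E :: "real^'q::finite^'n" and C :: "real^'n^'q"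
    and F :: "real^'q^'q" and blk :: "'q \<Rightarrow> 'b"
  assumes infeasible: "\<nexists>lam d. (\<forall>i. 0 < lam$i) \<and> (\<forall>k. 0 < d k) \<and>
      (\<forall>i. (A *v lam + E *v (\<chi> j. d (blk j)))$i < 0) \<and>
      (\<forall>j. (C *v lam + (F - mat 1) *v (\<chi> j. d (blk j)))$j < 0)"
  obtains p r where "\<forall>i. 0 \<le> p$i" "\<forall>j. 0 \<le> r$j" "p \<noteq> 0 \<or> r \<noteq> 0"
    "\<forall>k. 0 \<le> (p v* A + r v* C)$k"
    "\<forall>i. (\<Sum>j\<in>{j. blk j = blk i}. r$j) \<le> (\<Sum>j\<in>{j. blk j = blk i}. (p v* E + r v* F)$j)"
proof -
  define G where "G = block_mat A E C (F - mat 1) ** lump_mat blk"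
  have "\<nexists>x. (\<forall>i. 0 < x$i) \<and> (\<forall>i. (G *v x)$i < 0)"
  proof
    assume "\<exists>x. (\<forall>i. 0 < x$i) \<and> (\<forall>i. (G *v x)$i < 0)"
    then obtain x where x: "\<forall>i. 0 < x$i" and Gx: "\<forall>i. (G *v x)$i < 0"
      by blast
    define lam where "lam = (\<chi> i. x$Inl i)"
    define d where "d k = (if \<exists>j. blk j = k then x$Inr (SOME j. blk j = k) else 1)" for k
    have "(\<chi> j. x$Inr (block_rep blk j)) = (\<chi> j. d (blk j))"
      by (auto simp: vec_eq_iff d_def block_rep_def)
    then have G_eq: "G *v x = vec_append (A *v lam + E *v (\<chi> j. d (blk j)))
        (C *v lam + (F - mat 1) *v (\<chi> j. d (blk j)))"
      by (simp add: G_def lam_def lump_mat_mult_vec block_mat_mult_vec_append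
          flip: matrix_vector_mul_assoc)
    have "(A *v lam + E *v (\<chi> j. d (blk j)))$i < 0" for i
      using Gx[rule_format, of "Inl i"] unfolding G_eq by simp
    moreover have "(C *v lam + (F - mat 1) *v (\<chi> j. d (blk j)))$j < 0" for j
      using Gx[rule_format, of "Inr j"] unfolding G_eq by simp
    moreover have "\<forall>i. 0 < lam$i" "\<forall>k. 0 < d k"
      using x by (simp_all add: lam_def d_def)
    ultimately show False
      using infeasible by blast
  qed
  then obtain c where c: "c \<noteq> 0" "\<forall>i. 0 \<le> c$i" "\<forall>k. 0 \<le> (c v* G)$k"
    by (rule gordan_alternative)
  define p where "p = (\<chi> i. c$Inl i)"
  define r where "r = (\<chi> j. c$Inr j)"
  have c_eq: "c = vec_append p r"
    unfolding p_def r_def by (rule vec_append_split[symmetric])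
  have cG: "c v* G = vec_append (p v* A + r v* C) (p v* E + r v* F - r) v* lump_mat blk"
    unfolding G_def c_eq vector_matrix_mul_assoc[symmetric] vec_append_mult_block_mat
    by (simp add: vector_matrix_mult_diff_rdistrib add_diff_eq)
  have "0 \<le> (p v* A + r v* C)$k" for k
    using c(3)[rule_format, of "Inl k"] unfolding cG vec_mult_lump_mat by simp
  moreover have "(\<Sum>j\<in>{j. blk j = blk i}. r$j) \<le> (\<Sum>j\<in>{j. blk j = blk i}. (p v* E + r v* F)$j)" for i
    using c(3)[rule_format, of "Inr (block_rep blk i)"] unfolding cG vec_mult_lump_mat
    by (simp add: sum_subtractf)
  moreover have "p \<noteq> 0 \<or> r \<noteq> 0"
    using c(1) c_eq by simp
  moreover have "\<forall>i. 0 \<le> p$i" "\<forall>j. 0 \<le> r$j"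
    using c(2) by (simp_all add: p_def r_def)
  ultimately show ?thesis
    using that by blast
qed

theorem theorem5:
  fixes A :: "real^'n::finite^'n"
    and E :: "real^'q::finite^'n"
    and C :: "real^'n^'q"
    and F :: "real^'q^'q"
    and blk :: "'q \<Rightarrow> 'b"
  assumes "metzler A" and "nonneg_mat E" and "nonneg_mat C" and "nonneg_mat F"
  shows "(\<forall>\<Delta>\<in>unc_set blk. asym_stable A E C F \<Delta>) \<longleftrightarrow>
    (\<exists>(lam::real^'n) (d::'b \<Rightarrow> real).
        (\<forall>i. 0 < lam$i) \<and> (\<forall>k. 0 < d k) \<and>
        (let \<mu> = (\<chi> j. d (blk j)) :: real^'q in
           (\<forall>i. (A *v lam + E *v \<mu>)$i < 0) \<and>
           (\<forall>j. (C *v lam + (F - mat 1) *v \<mu>)$j < 0)))"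
  unfolding Let_def
proof
  assume stable: "\<forall>\<Delta>\<in>unc_set blk. asym_stable A E C F \<Delta>"
  show "\<exists>lam d. (\<forall>i. 0 < lam$i) \<and> (\<forall>k. 0 < d k) \<and>
      (\<forall>i. (A *v lam + E *v (\<chi> j. d (blk j)))$i < 0) \<and>
      (\<forall>j. (C *v lam + (F - mat 1) *v (\<chi> j. d (blk j)))$j < 0)"
  proof (rule ccontr)
    assume "\<not> ?thesis"
    then obtain p r where "\<forall>i. 0 \<le> p$i" "\<forall>j. 0 \<le> r$j" "p \<noteq> 0 \<or> r \<noteq> 0"
      "\<forall>k. 0 \<le> (p v* A + r v* C)$k"
      "\<forall>i. (\<Sum>j\<in>{j. blk j = blk i}. r$j) \<le> (\<Sum>j\<in>{j. blk j = blk i}. (p v* E + r v* F)$j)"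
      by (rule dual_certificate_if_infeasible)
    with stable show False
      using unstable_if_dual_certificate[OF assms] by blast
  qed
next
  assume "\<exists>lam d. (\<forall>i. 0 < lam$i) \<and> (\<forall>k. 0 < d k) \<and>
      (\<forall>i. (A *v lam + E *v (\<chi> j. d (blk j)))$i < 0) \<and>
      (\<forall>j. (C *v lam + (F - mat 1) *v (\<chi> j. d (blk j)))$j < 0)"
  then show "\<forall>\<Delta>\<in>unc_set blk. asym_stable A E C F \<Delta>"
    using asym_stable_if_feasible[OF assms] by blast
qed

end
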